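(* Let $\mathcal{G}$ be a finite weighted coloured--edge graph with $n\ge 2$ vertices and $k$ colours, and let $u\ne v$ be vertices. Then any set $S$ of minimal paths from $u$ to $v$ that are pairwise incomparable has $|S|\le k^{n-1}$. Equivalently, the set of distinct weight vectors $(\omega_c(p))_{c\in M}$ of minimal paths $p$ from $u$ to $v$ has at most $k^{n-1}$ elements.
   Context: A weighted coloured--edge graph $\mathcal{G}=\langle V,E,\omega,\lambda\rangle$ consists of a directed multigraph with vertex set $V$ and edge set $E$ (each edge $e$ has an initial vertex and a distinct terminal vertex; multiple edges between the same ordered pair are allowed), a weight function $\omega:E\to\mathbb{R}^+$ (strictly positive reals), and a surjective colour function $\lambda:E\to M$ onto a set $M$ of colours; $k=|M|$. A path from $u$ to $v$ is a sequence of edges $e_1,\dots,e_l$ ($l\ge1$) such that the initial vertex of $e_1$ is $u$, the terminal vertex of $e_l$ is $v$, the terminal vertex of $e_i$ is the initial vertex of $e_{i+1}$, and no vertex is visited twice. For a path $p$ and colour $c$, $\omega_c(p)$ is the sum of $\omega(e)$ over edges $e$ of $p$ with $\lambda(e)=c$. For paths $p,q$ from $u$ to $v$, $p\le q$ means $\omega_c(p)\le\omega_c(q)$ for all $c\in M$; $p,q$ are incomparable if neither $p\le q$ nor $q\le p$. A path $p$ from $u$ to $v$ is minimal if there is no path $q$ from $u$ to $v$ with $q\le p$ and $\omega_c(q)<\omega_c(p)$ for some colour $c$. *)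

theory Defs
  imports Complex_Main "HOL-Library.FuncSet"
begin

text \<open>A weighted coloured-edge graph: vertex set V, edge set E (abstract edges of
type 'e, allowing multi-edges), initial vertex src, terminal vertex tgt, weight w,
colour col, colour set M.\<close>

definition wce_graph ::
  "'v set \<Rightarrow> 'e set \<Rightarrow> ('e \<Rightarrow> 'v) \<Rightarrow> ('e \<Rightarrow> 'v) \<Rightarrow> ('e \<Rightarrow> real) \<Rightarrow> ('e \<Rightarrow> 'c) \<Rightarrow> 'c set \<Rightarrow> bool"
where
  "wce_graph V E src tgt w col M \<longleftrightarrow>
     (\<forall>e\<in>E. src e \<in> V \<and> tgt e \<in> V \<and> src e \<noteq> tgt e \<and> w e > 0) \<and> col ` E = M"

definition path_verts :: "('e \<Rightarrow> 'v) \<Rightarrow> ('e \<Rightarrow> 'v) \<Rightarrow> 'e list \<Rightarrow> 'v list" where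
  "path_verts src tgt p = src (List.hd p) # map tgt p"

definition is_path ::
  "'e set \<Rightarrow> ('e \<Rightarrow> 'v) \<Rightarrow> ('e \<Rightarrow> 'v) \<Rightarrow> 'v \<Rightarrow> 'v \<Rightarrow> 'e list \<Rightarrow> bool"
where
  "is_path E src tgt u v p \<longleftrightarrow>
     p \<noteq> [] \<and> set p \<subseteq> E \<and> src (List.hd p) = u \<and> tgt (last p) = v \<and>
     (\<forall>i. Suc i < length p \<longrightarrow> tgt (p ! i) = src (p ! Suc i)) \<and>
     distinct (path_verts src tgt p)"

definition cweight :: "('e \<Rightarrow> real) \<Rightarrow> ('e \<Rightarrow> 'c) \<Rightarrow> 'c \<Rightarrow> 'e list \<Rightarrow> real" where
  "cweight w col c p = sum_list (map (\<lambda>e. if col e = c then w e else 0) p)"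

definition path_le :: "('e \<Rightarrow> real) \<Rightarrow> ('e \<Rightarrow> 'c) \<Rightarrow> 'c set \<Rightarrow> 'e list \<Rightarrow> 'e list \<Rightarrow> bool" where
  "path_le w col M p q \<longleftrightarrow> (\<forall>c\<in>M. cweight w col c p \<le> cweight w col c q)"

definition incomparable :: "('e \<Rightarrow> real) \<Rightarrow> ('e \<Rightarrow> 'c) \<Rightarrow> 'c set \<Rightarrow> 'e list \<Rightarrow> 'e list \<Rightarrow> bool" where
  "incomparable w col M p q \<longleftrightarrow> \<not> path_le w col M p q \<and> \<not> path_le w col M q p"

definition minimal_path ::
  "'e set \<Rightarrow> ('e \<Rightarrow> 'v) \<Rightarrow> ('e \<Rightarrow> 'v) \<Rightarrow> ('e \<Rightarrow> real) \<Rightarrow> ('e \<Rightarrow> 'c) \<Rightarrow> 'c set \<Rightarrow> 'v \<Rightarrow> 'v \<Rightarrow> 'e list \<Rightarrow> bool"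
where
  "minimal_path E src tgt w col M u v p \<longleftrightarrow>
     is_path E src tgt u v p \<and>
     \<not> (\<exists>q. is_path E src tgt u v q \<and> path_le w col M q p \<and>
            (\<exists>c\<in>M. cweight w col c q < cweight w col c p))"

definition weight_vec :: "('e \<Rightarrow> real) \<Rightarrow> ('e \<Rightarrow> 'c) \<Rightarrow> 'c set \<Rightarrow> 'e list \<Rightarrow> ('c \<Rightarrow> real)" where
  "weight_vec w col M p = (\<lambda>c\<in>M. cweight w col c p)"

end

theory Submission
  imports Defs
begin

(* Weight vectors are compared componentwise; minimal paths are exactly the paths
   whose weight vector is Pareto-minimal among the weight vectors of all u-v paths,
   and pairwise incomparable paths have pairwise distinct weight vectors.  So it
   suffices to bound the number of Pareto-minimal weight vectors of u-v paths by
   k^(n-1).  Split the u-v paths according to the colour of their first edge: this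
   gives k subproblems in each of which all edges leaving u have one colour c.  In
   such a subproblem let e0 be a lightest edge leaving u, ending in x.  Contracting
   u into x (every other edge u->y becomes x->y of colour c with weight reduced by
   w(e0)) yields a graph on n-1 vertices whose x-v paths, shifted by the weight of
   e0, realise weight vectors of u-v paths and dominate all of them; hence the
   subproblem has at most k^(n-2) minimal vectors by induction, and k*k^(n-2)=k^(n-1).
   Because contraction creates new edges (and zero weights), the induction is run on
   graphs whose edges are explicit tuples (source, colour, weight, target) with
   nonnegative weights; the last part transfers the result to the given graph. *)

section \<open>Pareto-minimal vectors\<close>

definition pareto_min :: "'c set \<Rightarrow> ('c \<Rightarrow> real) set \<Rightarrow> ('c \<Rightarrow> real) set" where
  "pareto_min M A = {x \<in> A. \<not> (\<exists>y\<in>A. (\<forall>c\<in>M. y c \<le> x c) \<and> (\<exists>c\<in>M. y c < x c))}"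

lemma pareto_min_subset: "pareto_min M A \<subseteq> A"
  by (auto simp: pareto_min_def)

lemma pareto_min_antimono: "x \<in> pareto_min M A \<Longrightarrow> x \<in> B \<Longrightarrow> B \<subseteq> A \<Longrightarrow> x \<in> pareto_min M B"
  by (auto simp: pareto_min_def)

lemma pareto_min_dominated:
  assumes ext: "A \<subseteq> extensional M" and sub: "B \<subseteq> A"
    and dom: "\<forall>x\<in>A. \<exists>b\<in>B. \<forall>c\<in>M. b c \<le> x c"
  shows "pareto_min M A \<subseteq> pareto_min M B"
proof
  fix x assume x: "x \<in> pareto_min M A"
  then have xA: "x \<in> A" using pareto_min_subset by blast
  then obtain b where b: "b \<in> B" "\<forall>c\<in>M. b c \<le> x c" using dom by blast
  then have "\<not> (\<exists>c\<in>M. b c < x c)" using x sub by (auto simp: pareto_min_def)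
  with b(2) have "\<forall>c\<in>M. b c = x c" by (meson antisym_conv2)
  then have "b = x" using ext xA sub b(1) by (intro extensionalityI[of _ M]) auto
  then show "x \<in> pareto_min M B" using x b(1) sub by (blast intro: pareto_min_antimono)
qed

text \<open>The minimal elements of a union lie in the union of the minimal elements.\<close>
lemma card_pareto_min_UN:
  assumes "finite I" and "\<And>i. i \<in> I \<Longrightarrow> finite (A i)"
  shows "card (pareto_min M (\<Union>i\<in>I. A i)) \<le> (\<Sum>i\<in>I. card (pareto_min M (A i)))"
proof -
  have fin: "finite (pareto_min M (A i))" if "i \<in> I" for i
    using assms(2)[OF that] pareto_min_subset by (rule finite_subset[rotated])
  have "pareto_min M (\<Union>i\<in>I. A i) \<subseteq> (\<Union>i\<in>I. pareto_min M (A i))"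
  proof
    fix x assume x: "x \<in> pareto_min M (\<Union>i\<in>I. A i)"
    then obtain i where "i \<in> I" "x \<in> A i" using pareto_min_subset by blast
    then show "x \<in> (\<Union>i\<in>I. pareto_min M (A i))"
      using pareto_min_antimono[OF x] by blast
  qed
  then have "card (pareto_min M (\<Union>i\<in>I. A i)) \<le> card (\<Union>i\<in>I. pareto_min M (A i))"
    using assms(1) fin by (intro card_mono) auto
  also have "\<dots> \<le> (\<Sum>i\<in>I. card (pareto_min M (A i)))"
    using assms(1) by (rule card_UN_le)
  finally show ?thesis .
qed

definition vadd :: "'c set \<Rightarrow> ('c \<Rightarrow> real) \<Rightarrow> ('c \<Rightarrow> real) \<Rightarrow> 'c \<Rightarrow> real" where
  "vadd M x y = (\<lambda>c\<in>M. x c + y c)"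

lemma pareto_min_vadd: "pareto_min M (vadd M d ` Y) \<subseteq> vadd M d ` pareto_min M Y"
proof
  fix z assume z: "z \<in> pareto_min M (vadd M d ` Y)"
  then obtain y where y: "z = vadd M d y" "y \<in> Y" using pareto_min_subset by blast
  have "y \<in> pareto_min M Y"
    unfolding pareto_min_def
  proof (intro CollectI conjI notI)
    assume "\<exists>y'\<in>Y. (\<forall>c\<in>M. y' c \<le> y c) \<and> (\<exists>c\<in>M. y' c < y c)"
    then obtain y' where "y' \<in> Y" "\<forall>c\<in>M. vadd M d y' c \<le> z c" "\<exists>c\<in>M. vadd M d y' c < z c"
      by (auto simp: vadd_def y(1))
    then show False using z by (auto simp: pareto_min_def)
  qed (use y in simp)
  then show "z \<in> vadd M d ` pareto_min M Y" using y(1) by blast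
qed

lemma card_pareto_min_vadd:
  assumes "finite Y"
  shows "card (pareto_min M (vadd M d ` Y)) \<le> card (pareto_min M Y)"
proof -
  have fin: "finite (pareto_min M Y)"
    using assms pareto_min_subset by (rule finite_subset[rotated])
  have "card (pareto_min M (vadd M d ` Y)) \<le> card (vadd M d ` pareto_min M Y)"
    using fin by (intro card_mono pareto_min_vadd) auto
  also have "\<dots> \<le> card (pareto_min M Y)"
    by (rule card_image_le[OF fin])
  finally show ?thesis .
qed

section \<open>Graphs with explicit arcs\<close>

text \<open>An arc (source, colour, weight, target).  Arcs are data, so contracting a vertex
  can create new arcs without changing the type.\<close>
type_synonym ('v, 'c) arc = "'v \<times> 'c \<times> real \<times> 'v"

abbreviation asrc :: "('v, 'c) arc \<Rightarrow> 'v" where "asrc e \<equiv> fst e"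
abbreviation acol :: "('v, 'c) arc \<Rightarrow> 'c" where "acol e \<equiv> fst (snd e)"
abbreviation awt :: "('v, 'c) arc \<Rightarrow> real" where "awt e \<equiv> fst (snd (snd e))"
abbreviation atgt :: "('v, 'c) arc \<Rightarrow> 'v" where "atgt e \<equiv> snd (snd (snd e))"

definition arc_graph :: "'v set \<Rightarrow> ('v, 'c) arc set \<Rightarrow> 'c set \<Rightarrow> bool" where
  "arc_graph V E M \<longleftrightarrow> finite V \<and> finite E \<and> finite M \<and>
     (\<forall>e\<in>E. asrc e \<in> V \<and> atgt e \<in> V \<and> asrc e \<noteq> atgt e \<and> awt e \<ge> 0 \<and> acol e \<in> M)"

fun spath :: "('v, 'c) arc set \<Rightarrow> 'v set \<Rightarrow> 'v \<Rightarrow> 'v \<Rightarrow> ('v, 'c) arc list \<Rightarrow> bool" where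
  "spath E A x v [] \<longleftrightarrow> x = v \<and> x \<notin> A"
| "spath E A x v (e # q) \<longleftrightarrow> e \<in> E \<and> asrc e = x \<and> x \<notin> A \<and> spath E (insert x A) (atgt e) v q"

lemma spath_start_notin: "spath E A x v q \<Longrightarrow> x \<notin> A"
  by (cases q) auto

lemma spath_end_notin: "spath E A x v q \<Longrightarrow> v \<notin> A"
  by (induction q arbitrary: x A) auto

lemma spath_arcs: "spath E A x v q \<Longrightarrow> set q \<subseteq> E"
  by (induction q arbitrary: x A) auto

lemma spath_avoids: "spath E A x v q \<Longrightarrow> e \<in> set q \<Longrightarrow> asrc e \<notin> A \<and> atgt e \<notin> A"
proof (induction q arbitrary: x A)
  case (Cons e' q)
  then have "spath E (insert x A) (atgt e') v q" by simp
  with Cons show ?case by (auto dest: spath_start_notin)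
qed simp

lemma spath_transfer:
  assumes "spath E A x v q" and "set q \<subseteq> E'"
    and "B \<subseteq> A \<union> {y. y \<noteq> x \<and> (\<forall>e\<in>set q. atgt e \<noteq> y)}"
  shows "spath E' B x v q"
  using assms
proof (induction q arbitrary: x A B)
  case (Cons e q)
  have "spath E' (insert x B) (atgt e) v q"
    by (rule Cons.IH) (use Cons.prems in auto)
  with Cons.prems show ?case by auto
qed auto

lemma spath_suffix:
  assumes "spath E A x v q" and "y = x \<or> (\<exists>e\<in>set q. atgt e = y)"
  shows "\<exists>q1 q2 A'. q = q1 @ q2 \<and> spath E A' y v q2"
  using assms
proof (induction q arbitrary: x A)
  case (Cons e q)
  show ?case
  proof (cases "y = x")
    case True
    then show ?thesis using Cons.prems(1) by (metis append_Nil)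
  next
    case False
    then have "y = atgt e \<or> (\<exists>e\<in>set q. atgt e = y)" using Cons.prems(2) by auto
    then obtain q1 q2 A' where "q = q1 @ q2" "spath E A' y v q2"
      using Cons.IH[of "insert x A" "atgt e"] Cons.prems(1) by auto
    then show ?thesis by (metis append_Cons)
  qed
qed auto

text \<open>Paths repeat no arc, so a finite graph has finitely many paths.\<close>
lemma spath_distinct: "spath E A x v q \<Longrightarrow> distinct q"
proof (induction q arbitrary: x A)
  case (Cons e q)
  then have "spath E (insert x A) (atgt e) v q" by simp
  with Cons show ?case by (auto dest: spath_avoids)
qed simp

lemma finite_spaths: "finite E \<Longrightarrow> finite {q. spath E A x v q}"
  by (rule finite_subset[OF _ finite_subset_distinct[of E]]) (auto dest: spath_arcs spath_distinct)

lemma spath_loop: "spath E {} v v q \<longleftrightarrow> q = []"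
  by (cases q) (auto dest: spath_end_notin)

definition wvec :: "'c set \<Rightarrow> ('v, 'c) arc list \<Rightarrow> 'c \<Rightarrow> real" where
  "wvec M p = (\<lambda>c\<in>M. sum_list (map (\<lambda>e. if acol e = c then awt e else 0) p))"

lemma wvec_extensional: "wvec M p \<in> extensional M"
  by (simp add: wvec_def)

lemma wvec_append: "wvec M (p @ q) = vadd M (wvec M p) (wvec M q)"
  by (simp add: wvec_def vadd_def restrict_def fun_eq_iff)

lemma wvec_single: "c \<in> M \<Longrightarrow> wvec M [e] c = (if acol e = c then awt e else 0)"
  by (simp add: wvec_def)

lemma wvec_nonneg: "\<forall>e\<in>set p. awt e \<ge> 0 \<Longrightarrow> c \<in> M \<Longrightarrow> wvec M p c \<ge> 0"
  by (auto simp: wvec_def intro!: sum_list_nonneg)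

definition min_weights :: "('v, 'c) arc set \<Rightarrow> 'c set \<Rightarrow> 'v \<Rightarrow> 'v \<Rightarrow> ('c \<Rightarrow> real) set" where
  "min_weights E M u v = pareto_min M (wvec M ` {p. spath E {} u v p})"

lemma card_min_weights_loop:
  fixes E :: "('v, 'c) arc set"
  shows "card (min_weights E M v v) \<le> 1"
proof -
  have "min_weights E M v v \<subseteq> {wvec M ([] :: ('v, 'c) arc list)}"
    using pareto_min_subset by (auto simp: min_weights_def spath_loop)
  then show ?thesis by (metis card.empty card.insert card_mono empty_iff finite.intros One_nat_def)
qed

section \<open>Contracting a vertex whose outgoing arcs have a single colour\<close>

locale contraction =
  fixes E :: "('v, 'c) arc set" and u :: 'v and e0 :: "('v, 'c) arc"
  assumes e0_arc: "e0 \<in> E" and e0_src: "asrc e0 = u"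
    and out_colour: "\<And>e. e \<in> E \<Longrightarrow> asrc e = u \<Longrightarrow> acol e = acol e0"
    and out_weight: "\<And>e. e \<in> E \<Longrightarrow> asrc e = u \<Longrightarrow> awt e0 \<le> awt e"
    and out_no_loop: "\<And>e. e \<in> E \<Longrightarrow> asrc e = u \<Longrightarrow> atgt e \<noteq> u"
begin

definition shortcut :: "('v, 'c) arc \<Rightarrow> ('v, 'c) arc" where
  "shortcut e = (atgt e0, acol e0, awt e - awt e0, atgt e)"

definition contracted :: "('v, 'c) arc set" where
  "contracted = {e \<in> E. asrc e \<noteq> u \<and> atgt e \<noteq> u}
     \<union> shortcut ` {e \<in> E. asrc e = u \<and> atgt e \<noteq> atgt e0}"

lemma head_ne_u: "atgt e0 \<noteq> u"
  using out_no_loop[OF e0_arc e0_src] .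

lemma contracted_original:
  "e \<in> contracted \<Longrightarrow> asrc e \<noteq> atgt e0 \<Longrightarrow> e \<in> E \<and> asrc e \<noteq> u \<and> atgt e \<noteq> u"
  by (auto simp: contracted_def shortcut_def)

lemma finite_contracted: "finite E \<Longrightarrow> finite contracted"
  by (simp add: contracted_def)

lemma arc_graph_contracted: "arc_graph V E M \<Longrightarrow> arc_graph (V - {u}) contracted M"
  using e0_arc e0_src head_ne_u
  by (auto simp: arc_graph_def contracted_def shortcut_def dest: out_weight out_no_loop)

lemma wvec_shortcut:
  "e \<in> E \<Longrightarrow> asrc e = u \<Longrightarrow> wvec M (e # q) = vadd M (wvec M [e0]) (wvec M (shortcut e # q))"
  by (auto simp: wvec_def vadd_def shortcut_def fun_eq_iff dest: out_colour)

lemma lift_path: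
  assumes q: "spath contracted {} (atgt e0) v q"
  shows "\<exists>p. spath E {} u v p \<and> wvec M p = vadd M (wvec M [e0]) (wvec M q)"
proof (cases "\<exists>e q'. q = shortcut e # q' \<and> e \<in> E \<and> asrc e = u")
  case True
  then obtain e q' where e: "q = shortcut e # q'" "e \<in> E" "asrc e = u" by blast
  have q': "spath contracted {atgt e0} (atgt e) v q'"
    using q e(1) by (simp add: shortcut_def)
  have "set q' \<subseteq> E" and "\<forall>e'\<in>set q'. atgt e' \<noteq> u"
    using spath_arcs[OF q'] spath_avoids[OF q'] contracted_original by blast+
  then have "spath E {u} (atgt e) v q'"
    using spath_transfer[OF q'] out_no_loop[OF e(2,3)] by auto
  then have "spath E {} u v (e # q')" using e by simp
  then show ?thesis using wvec_shortcut[OF e(2,3)] e(1) by blast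
next
  case False
  have orig: "e' \<in> E \<and> atgt e' \<noteq> u" if e': "e' \<in> set q" for e'
  proof (cases q)
    case (Cons e1 q')
    have e1: "e1 \<in> contracted" and q': "spath contracted {atgt e0} (atgt e1) v q'"
      using q Cons by auto
    have "e1 \<notin> shortcut ` {e \<in> E. asrc e = u \<and> atgt e \<noteq> atgt e0}"
      using False Cons by blast
    then have "e1 \<in> E \<and> atgt e1 \<noteq> u" using e1 by (auto simp: contracted_def)
    moreover have "e' \<in> E \<and> atgt e' \<noteq> u" if "e' \<in> set q'"
      using spath_arcs[OF q'] spath_avoids[OF q'] contracted_original that by blast
    ultimately show ?thesis using e' Cons by auto
  qed (use e' in simp)
  then have "spath E {u} (atgt e0) v q"
    using head_ne_u by (intro spath_transfer[OF q]) blast+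
  then have "spath E {} u v (e0 # q)" using e0_arc e0_src by simp
  then show ?thesis using wvec_append[of M "[e0]" q] by (metis append_Cons append_Nil)
qed

lemma dominate_path:
  assumes nonneg: "\<forall>e\<in>E. 0 \<le> awt e" and p: "spath E {} u v p" and "u \<noteq> v"
  shows "\<exists>q. spath contracted {} (atgt e0) v q \<and>
    (\<forall>c\<in>M. vadd M (wvec M [e0]) (wvec M q) c \<le> wvec M p c)"
proof -
  obtain e p' where pe: "p = e # p'" using p \<open>u \<noteq> v\<close> by (cases p) auto
  have e: "e \<in> E" "asrc e = u" and p': "spath E {u} (atgt e) v p'" using p pe by auto
  have p'_orig: "e' \<in> E \<and> asrc e' \<noteq> u \<and> atgt e' \<noteq> u" if "e' \<in> set p'" for e'
    using spath_arcs[OF p'] spath_avoids[OF p'] that by blast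
  show ?thesis
  proof (cases "atgt e0 = atgt e \<or> (\<exists>e'\<in>set p'. atgt e' = atgt e0)")
    case True
    then obtain q1 q2 A' where split: "p' = q1 @ q2" "spath E A' (atgt e0) v q2"
      using spath_suffix[OF p'] by blast
    have "set q2 \<subseteq> contracted"
      using p'_orig split(1) by (auto simp: contracted_def)
    then have q2: "spath contracted {} (atgt e0) v q2"
      using spath_transfer[OF split(2)] by blast
    have "vadd M (wvec M [e0]) (wvec M q2) c \<le> wvec M p c" if c: "c \<in> M" for c
    proof -
      have "wvec M [e0] c \<le> wvec M [e] c"
        using c e out_colour out_weight by (simp add: wvec_single)
      moreover have "0 \<le> wvec M q1 c"
        using p'_orig nonneg split(1) c by (intro wvec_nonneg) auto
      moreover have "wvec M p c = wvec M [e] c + (wvec M q1 c + wvec M q2 c)"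
        using c wvec_append[of M "[e]" "q1 @ q2"] wvec_append[of M q1 q2]
        by (simp add: pe split(1) vadd_def)
      ultimately show ?thesis using c by (simp add: vadd_def)
    qed
    with q2 show ?thesis by blast
  next
    case False
    then have "shortcut e \<in> contracted" using e by (auto simp: contracted_def)
    moreover have "spath contracted {atgt e0} (atgt e) v p'"
    proof (rule spath_transfer[OF p'])
      show "set p' \<subseteq> contracted" using p'_orig by (auto simp: contracted_def)
    qed (use False in auto)
    ultimately have "spath contracted {} (atgt e0) v (shortcut e # p')"
      by (simp add: shortcut_def)
    moreover have "wvec M p = vadd M (wvec M [e0]) (wvec M (shortcut e # p'))"
      using wvec_shortcut[OF e] pe by simp
    ultimately show ?thesis by (metis order_refl)
  qed
qed

lemma card_min_weights_contracted:
  assumes "\<forall>e\<in>E. 0 \<le> awt e" and "finite E" and "u \<noteq> v"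
  shows "card (min_weights E M u v) \<le> card (min_weights contracted M (atgt e0) v)"
proof -
  let ?A = "wvec M ` {p. spath E {} u v p}"
  let ?Y = "wvec M ` {q. spath contracted {} (atgt e0) v q}"
  let ?B = "vadd M (wvec M [e0]) ` ?Y"
  have finY: "finite ?Y"
    by (intro finite_imageI finite_spaths finite_contracted assms(2))
  have "?B \<subseteq> ?A"
  proof
    fix b assume "b \<in> ?B"
    then obtain q where q: "spath contracted {} (atgt e0) v q"
      and b: "b = vadd M (wvec M [e0]) (wvec M q)"
      by blast
    obtain p where "spath E {} u v p" "wvec M p = b"
      using lift_path[OF q, of M] b by blast
    then show "b \<in> ?A" by (metis imageI mem_Collect_eq)
  qed
  moreover have "\<exists>b\<in>?B. \<forall>c\<in>M. b c \<le> x c" if "x \<in> ?A" for x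
  proof -
    obtain p where p: "spath E {} u v p" and x: "x = wvec M p" using \<open>x \<in> ?A\<close> by blast
    obtain q where "spath contracted {} (atgt e0) v q"
      and "\<forall>c\<in>M. vadd M (wvec M [e0]) (wvec M q) c \<le> wvec M p c"
      using dominate_path[OF assms(1) p assms(3)] by blast
    then show ?thesis unfolding x by (intro bexI[of _ "vadd M (wvec M [e0]) (wvec M q)"]) auto
  qed
  ultimately have "pareto_min M ?A \<subseteq> pareto_min M ?B"
    using wvec_extensional by (intro pareto_min_dominated) auto
  then have "card (pareto_min M ?A) \<le> card (pareto_min M ?B)"
    by (rule card_mono[OF finite_subset[OF pareto_min_subset finite_imageI[OF finY]]])
  also have "\<dots> \<le> card (pareto_min M ?Y)"
    using finY by (rule card_pareto_min_vadd)
  finally show ?thesis by (simp add: min_weights_def)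
qed

end

lemma min_weights_no_out:
  assumes "\<forall>e\<in>E. asrc e \<noteq> u" and "u \<noteq> v"
  shows "min_weights E M u v = {}"
proof -
  have "\<not> spath E {} u v p" for p
    using assms by (cases p) auto
  then show ?thesis by (simp add: min_weights_def pareto_min_def)
qed

lemma lightest_out_arc:
  assumes G: "arc_graph V E M" and one_colour: "\<forall>e\<in>E. asrc e = u \<longrightarrow> acol e = c"
    and out: "\<exists>e\<in>E. asrc e = u"
  obtains e0 where "contraction E u e0"
proof -
  let ?Out = "{e \<in> E. asrc e = u}"
  have fin: "finite ?Out" using G by (simp add: arc_graph_def)
  have ne: "?Out \<noteq> {}" using out by blast
  define e0 where "e0 = arg_min_on awt ?Out"
  have e0: "e0 \<in> E" "asrc e0 = u"
    using arg_min_if_finite(1)[OF fin ne, where f = awt] by (simp_all add: e0_def)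
  have lightest: "awt e0 \<le> awt e" if "e \<in> E" "asrc e = u" for e
    using arg_min_if_finite(2)[OF fin ne, where f = awt] that
    unfolding e0_def not_less[symmetric] by blast
  have "contraction E u e0"
  proof
    show "acol e = acol e0" if "e \<in> E" "asrc e = u" for e
      using one_colour that e0 by simp
    show "atgt e \<noteq> u" if "e \<in> E" "asrc e = u" for e
      using G that unfolding arc_graph_def by force
  qed (use e0 lightest in auto)
  then show ?thesis by (rule that)
qed

lemma card_min_weights_one_colour:
  fixes V :: "'v set" and E :: "('v, 'c) arc set"
  assumes IH: "\<And>(V' :: 'v set) E' u' v'. arc_graph V' E' M \<Longrightarrow> u' \<in> V' \<Longrightarrow> v' \<in> V' \<Longrightarrow> u' \<noteq> v' \<Longrightarrow>
      card V' < card V \<Longrightarrow> card (min_weights E' M u' v') \<le> card M ^ (card V' - 1)"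
    and G: "arc_graph V E M" and uv: "u \<in> V" "v \<in> V" "u \<noteq> v"
    and one_colour: "\<forall>e\<in>E. asrc e = u \<longrightarrow> acol e = c"
  shows "card (min_weights E M u v) \<le> card M ^ (card V - 2)"
proof (cases "\<exists>e\<in>E. asrc e = u")
  case False
  then show ?thesis using min_weights_no_out uv(3) by (metis card.empty zero_le)
next
  case True
  then obtain e0 where "contraction E u e0" using lightest_out_arc[OF G one_colour] by blast
  then interpret contraction E u e0 .
  have fin: "finite V" "finite E" "finite M" and e0: "acol e0 \<in> M" "atgt e0 \<in> V"
    using G e0_arc by (auto simp: arc_graph_def)
  have "card (min_weights E M u v) \<le> card (min_weights contracted M (atgt e0) v)"
    using G uv(3) by (intro card_min_weights_contracted) (auto simp: arc_graph_def)
  also have "\<dots> \<le> card M ^ (card V - 2)"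
  proof (cases "atgt e0 = v")
    case True
    have "1 \<le> card M ^ (card V - 2)" using fin(3) e0(1) by (auto simp: Suc_le_eq card_gt_0_iff)
    then show ?thesis unfolding True using card_min_weights_loop[of contracted M v] by linarith
  next
    case False
    have "card (V - {u}) < card V" using card_Diff1_less[OF fin(1) uv(1)] .
    then have "card (min_weights contracted M (atgt e0) v) \<le> card M ^ (card (V - {u}) - 1)"
      using IH[OF arc_graph_contracted[OF G]] False e0(2) head_ne_u uv by blast
    moreover have "card (V - {u}) - 1 = card V - 2" using uv(1) fin(1) by simp
    ultimately show ?thesis by simp
  qed
  finally show ?thesis .
qed

lemma spaths_by_first_colour:
  assumes G: "arc_graph V E M" and "u \<noteq> v"
  shows "{p. spath E {} u v p} = (\<Union>c\<in>M. {p. spath {e \<in> E. asrc e = u \<longrightarrow> acol e = c} {} u v p})"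
proof (intro equalityI subsetI)
  fix p assume "p \<in> {p. spath E {} u v p}"
  then have p: "spath E {} u v p" by simp
  then obtain e p' where pe: "p = e # p'" using \<open>u \<noteq> v\<close> by (cases p) auto
  have p': "spath E {u} (atgt e) v p'" and e: "e \<in> E" using p pe by auto
  have "set p \<subseteq> {e' \<in> E. asrc e' = u \<longrightarrow> acol e' = acol e}"
    using spath_arcs[OF p] spath_avoids[OF p'] pe by auto
  then have "spath {e' \<in> E. asrc e' = u \<longrightarrow> acol e' = acol e} {} u v p"
    using spath_transfer[OF p] by blast
  moreover have "acol e \<in> M" using G e by (auto simp: arc_graph_def)
  ultimately show "p \<in> (\<Union>c\<in>M. {p. spath {e \<in> E. asrc e = u \<longrightarrow> acol e = c} {} u v p})"
    by blast
next
  fix p assume "p \<in> (\<Union>c\<in>M. {p. spath {e \<in> E. asrc e = u \<longrightarrow> acol e = c} {} u v p})"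
  then obtain c where p: "spath {e \<in> E. asrc e = u \<longrightarrow> acol e = c} {} u v p" by blast
  have "set p \<subseteq> E" using spath_arcs[OF p] by auto
  then show "p \<in> {p. spath E {} u v p}" using spath_transfer[OF p] by blast
qed

theorem card_min_weights_le:
  assumes "arc_graph V E M" and "u \<in> V" and "v \<in> V" and "u \<noteq> v"
  shows "card (min_weights E M u v) \<le> card M ^ (card V - 1)"
  using assms
proof (induction "card V" arbitrary: V E u v rule: less_induct)
  case less
  define Ec where "Ec c = {e \<in> E. asrc e = u \<longrightarrow> acol e = c}" for c
  have fin: "finite M" "finite V" "finite E" "\<And>c. finite (Ec c)"
    using less.prems(1) by (auto simp: arc_graph_def Ec_def intro: finite_subset)
  have "card V \<ge> 2"
    using less.prems fin(2) card_mono[of V "{u, v}"] by auto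
  have "card (min_weights E M u v) \<le> (\<Sum>c\<in>M. card (min_weights (Ec c) M u v))"
    unfolding min_weights_def spaths_by_first_colour[OF less.prems(1,4)] image_UN Ec_def[symmetric]
    using fin by (intro card_pareto_min_UN finite_imageI finite_spaths) auto
  also have "\<dots> \<le> (\<Sum>c\<in>M. card M ^ (card V - 2))"
  proof (intro sum_mono card_min_weights_one_colour[OF less.hyps])
    show "arc_graph V (Ec c) M" for c
      using less.prems(1) by (auto simp: arc_graph_def Ec_def)
  qed (use less.prems in \<open>auto simp: Ec_def\<close>)
  also have "\<dots> = card M ^ Suc (card V - 2)" using fin(1) by simp
  also have "\<dots> = card M ^ (card V - 1)"
    using \<open>card V \<ge> 2\<close> by (simp add: Suc_diff_Suc numeral_2_eq_2)
  finally show ?case .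
qed

section \<open>Transfer to weighted coloured-edge graphs\<close>

definition to_arc :: "('e \<Rightarrow> 'v) \<Rightarrow> ('e \<Rightarrow> 'v) \<Rightarrow> ('e \<Rightarrow> real) \<Rightarrow> ('e \<Rightarrow> 'c) \<Rightarrow> 'e \<Rightarrow> ('v, 'c) arc" where
  "to_arc src tgt w col e = (src e, col e, w e, tgt e)"

lemma to_arc_sel [simp]:
  "asrc (to_arc src tgt w col e) = src e" "acol (to_arc src tgt w col e) = col e"
  "awt (to_arc src tgt w col e) = w e" "atgt (to_arc src tgt w col e) = tgt e"
  by (simp_all add: to_arc_def)

lemma atgt_comp_to_arc [simp]: "atgt \<circ> to_arc src tgt w col = tgt"
  by (simp add: fun_eq_iff)

lemma arc_graph_to_arc:
  assumes "wce_graph V E src tgt w col M" and "finite V" and "finite E"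
  shows "arc_graph V (to_arc src tgt w col ` E) M"
  using assms by (auto simp: wce_graph_def arc_graph_def to_arc_def less_imp_le)

lemma chain_Cons_Cons:
  "(\<forall>i. Suc i < length (a # b # xs) \<longrightarrow> f ((a # b # xs) ! i) = g ((a # b # xs) ! Suc i)) \<longleftrightarrow>
   f a = g b \<and> (\<forall>i. Suc i < length (b # xs) \<longrightarrow> f ((b # xs) ! i) = g ((b # xs) ! Suc i))"
  by (auto simp: less_Suc_eq_0_disj)

text \<open>Non-recursive description of simple paths, matching the definition of is_path.\<close>
lemma spath_iff:
  "spath E A x v q \<longleftrightarrow> (if q = [] then x = v \<and> x \<notin> A else
     set q \<subseteq> E \<and> asrc (hd q) = x \<and> atgt (last q) = v \<and>
     (\<forall>i. Suc i < length q \<longrightarrow> atgt (q ! i) = asrc (q ! Suc i)) \<and>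
     distinct (x # map atgt q) \<and> set (x # map atgt q) \<inter> A = {})"
proof (induction q arbitrary: x A)
  case (Cons e q)
  show ?case
  proof (cases "q = []")
    case False
    let ?chain = "\<lambda>q. \<forall>i. Suc i < length q \<longrightarrow> atgt (q ! i) = asrc (q ! Suc i)"
    have IH: "spath E (insert x A) (atgt e) v q \<longleftrightarrow> set q \<subseteq> E \<and> asrc (hd q) = atgt e \<and>
        atgt (last q) = v \<and> ?chain q \<and> distinct (atgt e # map atgt q) \<and>
        set (atgt e # map atgt q) \<inter> insert x A = {}"
      using Cons.IH[of "insert x A" "atgt e"] False by (simp only: if_False)
    have chain: "?chain (e # q) \<longleftrightarrow> atgt e = asrc (hd q) \<and> ?chain q"
      using False chain_Cons_Cons[of e "hd q" "tl q" atgt asrc] by simp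
    show ?thesis
      unfolding spath.simps(2) IH using False chain by auto
  qed auto
qed simp

lemma is_path_iff_spath:
  assumes "set p \<subseteq> E" and "u \<noteq> v"
  shows "is_path E src tgt u v p \<longleftrightarrow>
    spath (to_arc src tgt w col ` E) {} u v (map (to_arc src tgt w col) p)"
  using assms
  by (cases "p = []") (auto simp: is_path_def spath_iff path_verts_def hd_map last_map)

lemma weight_vec_to_arc: "weight_vec w col M p = wvec M (map (to_arc src tgt w col) p)"
  unfolding weight_vec_def cweight_def wvec_def
  by (intro restrict_ext arg_cong[where f = sum_list] map_cong) (simp_all add: to_arc_def)

lemma weight_vecs_of_paths:
  assumes "u \<noteq> v"
  shows "weight_vec w col M ` {p. is_path E src tgt u v p}
    = wvec M ` {q. spath (to_arc src tgt w col ` E) {} u v q}" (is "?L = ?R")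
proof
  show "?L \<subseteq> ?R"
  proof
    fix x assume "x \<in> ?L"
    then obtain p where p: "is_path E src tgt u v p" and x: "x = weight_vec w col M p"
      by blast
    then have "spath (to_arc src tgt w col ` E) {} u v (map (to_arc src tgt w col) p)"
      using is_path_iff_spath[OF _ assms, of p E src tgt w col] by (simp add: is_path_def)
    then show "x \<in> ?R" unfolding x weight_vec_to_arc[of w col M p src tgt] by blast
  qed
next
  show "?R \<subseteq> ?L"
  proof
    fix x assume "x \<in> ?R"
    then obtain q where q: "spath (to_arc src tgt w col ` E) {} u v q" and x: "x = wvec M q"
      by blast
    have "q \<in> lists (to_arc src tgt w col ` E)" using spath_arcs[OF q] by auto
    then have "q \<in> map (to_arc src tgt w col) ` lists E" by (simp only: lists_image)
    then obtain p where p: "set p \<subseteq> E" "q = map (to_arc src tgt w col) p" by auto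
    then have "is_path E src tgt u v p"
      using q is_path_iff_spath[OF p(1) assms, of src tgt w col] by simp
    moreover have "x = weight_vec w col M p"
      using x p(2) weight_vec_to_arc[of w col M p src tgt] by simp
    ultimately show "x \<in> ?L" by blast
  qed
qed

lemma weight_vecs_of_minimal_paths:
  "weight_vec w col M ` {p. minimal_path E src tgt w col M u v p}
    = pareto_min M (weight_vec w col M ` {p. is_path E src tgt u v p})"
  by (auto simp: minimal_path_def pareto_min_def path_le_def weight_vec_def)

text \<open>Paths visit no vertex twice, so they repeat no edge and are finitely many.\<close>
lemma finite_paths:
  assumes "finite E"
  shows "finite {p. is_path E src tgt u v p}"
proof (rule finite_subset[OF _ finite_subset_distinct[OF assms]])
  show "{p. is_path E src tgt u v p} \<subseteq> {xs. set xs \<subseteq> E \<and> distinct xs}"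
    by (auto simp: is_path_def path_verts_def distinct_map)
qed

lemma incomparable_inj:
  assumes "\<forall>p\<in>S. \<forall>q\<in>S. p \<noteq> q \<longrightarrow> incomparable w col M p q"
  shows "inj_on (weight_vec w col M) S"
proof (rule inj_onI, rule ccontr)
  fix p q assume pq: "p \<in> S" "q \<in> S" "p \<noteq> q"
    and eq: "weight_vec w col M p = weight_vec w col M q"
  have "cweight w col c p = cweight w col c q" if "c \<in> M" for c
    using fun_cong[OF eq, of c] that by (simp add: weight_vec_def)
  then have "path_le w col M p q" by (simp add: path_le_def)
  then show False using assms pq by (simp add: incomparable_def)
qed


theorem theorem2:
  fixes V :: "'v set" and E :: "'e set" and src tgt :: "'e \<Rightarrow> 'v"
    and w :: "'e \<Rightarrow> real" and col :: "'e \<Rightarrow> 'c" and M :: "'c set"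
    and u v :: 'v and S :: "'e list set"
  assumes "wce_graph V E src tgt w col M"
    and "finite V" and "finite E"
    and "card V \<ge> 2"
    and "u \<in> V" and "v \<in> V" and "u \<noteq> v"
    and "\<forall>p\<in>S. minimal_path E src tgt w col M u v p"
    and "\<forall>p\<in>S. \<forall>q\<in>S. p \<noteq> q \<longrightarrow> incomparable w col M p q"
  shows "finite S \<and> card S \<le> card M ^ (card V - 1)
    \<and> card (weight_vec w col M ` {p. minimal_path E src tgt w col M u v p}) \<le> card M ^ (card V - 1)"
proof -
  let ?Min = "{p. minimal_path E src tgt w col M u v p}"
  let ?wv = "weight_vec w col M"
  have bound: "card (?wv ` ?Min) \<le> card M ^ (card V - 1)"
    using card_min_weights_le[OF arc_graph_to_arc[OF assms(1-3)] assms(5-7)]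
    by (simp add: weight_vecs_of_minimal_paths weight_vecs_of_paths[OF assms(7)] min_weights_def)
  have "finite ?Min"
    using finite_paths[OF assms(3)] by (rule finite_subset[rotated]) (auto simp: minimal_path_def)
  moreover have S_min: "S \<subseteq> ?Min" using assms(8) by blast
  ultimately have "finite S" by (rule finite_subset[rotated])
  have "card S = card (?wv ` S)"
    using incomparable_inj[OF assms(9)] by (rule card_image[symmetric])
  also have "\<dots> \<le> card (?wv ` ?Min)"
    using \<open>finite ?Min\<close> S_min by (intro card_mono) auto
  finally show ?thesis using \<open>finite S\<close> bound by simp
qed

end
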